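(* Let $F\in\mathbb C[x,y,s,t]$ be a polynomial of degree $d$ that is not Cartesian. Then there are at most $d^2$ points $q=(s_q,t_q)\in\mathbb C^2$ for which $C_q=\mathbb C^2$, where $C_q=\{(x,y)\in\mathbb C^2: F(x,y,s_q,t_q)=0\}$.
   Context: $F\in\mathbb C[x,y,s,t]$ is Cartesian if there exist $G\in\mathbb C[x,y]\setminus\mathbb C$, $K\in\mathbb C[s,t]\setminus\mathbb C$ and $H,L\in\mathbb C[x,y,s,t]$ with $F=G(x,y)H(x,y,s,t)+K(s,t)L(x,y,s,t)$. *)

theory Defs
  imports Complex_Main "HOL-Library.Poly_Mapping"
begin

datatype vr = X | Y | S | T

text \<open>Polynomials in C[x,y,s,t]: finitely supported maps from monomials
  (exponent vectors vr =>0 nat) to complex coefficients; multiplication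
  is the convolution product of Poly_Mapping.\<close>
type_synonym mpoly4 = "(vr \<Rightarrow>\<^sub>0 nat) \<Rightarrow>\<^sub>0 complex"

definition vars :: "mpoly4 \<Rightarrow> vr set" where
  "vars p = {v. \<exists>m\<in>Poly_Mapping.keys p. v \<in> Poly_Mapping.keys m}"

definition mon_deg :: "(vr \<Rightarrow>\<^sub>0 nat) \<Rightarrow> nat" where
  "mon_deg m = (\<Sum>v\<in>Poly_Mapping.keys m. Poly_Mapping.lookup m v)"

text \<open>Total degree (the zero polynomial gets degree 0).\<close>
definition total_degree :: "mpoly4 \<Rightarrow> nat" where
  "total_degree p = Max (insert 0 (mon_deg ` Poly_Mapping.keys p))"

definition eval :: "mpoly4 \<Rightarrow> (vr \<Rightarrow> complex) \<Rightarrow> complex" where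
  "eval p a = (\<Sum>m\<in>Poly_Mapping.keys p. Poly_Mapping.lookup p m * (\<Prod>v\<in>Poly_Mapping.keys m. a v ^ Poly_Mapping.lookup m v))"

definition pt :: "complex \<Rightarrow> complex \<Rightarrow> complex \<Rightarrow> complex \<Rightarrow> vr \<Rightarrow> complex" where
  "pt x y s t v = (case v of X \<Rightarrow> x | Y \<Rightarrow> y | S \<Rightarrow> s | T \<Rightarrow> t)"

definition cartesian :: "mpoly4 \<Rightarrow> bool" where
  "cartesian F \<longleftrightarrow> (\<exists>G K H L. vars G \<subseteq> {X, Y} \<and> vars G \<noteq> {} \<and>
      vars K \<subseteq> {S, T} \<and> vars K \<noteq> {} \<and> F = G * H + K * L)"

definition fiber_curve :: "mpoly4 \<Rightarrow> complex \<times> complex \<Rightarrow> (complex \<times> complex) set" where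
  "fiber_curve F q = {(x, y). eval F (pt x y (fst q) (snd q)) = 0}"

end

theory Submission
  imports Defs "HOL-Computational_Algebra.Polynomial_Factorial" "HOL-Computational_Algebra.Field_as_Ring"
begin

text \<open>Write \<open>F = \<Sum>\<^sub>a\<^sub>b f\<^sub>a\<^sub>b(s,t) x\<^sup>a y\<^sup>b\<close>. Then \<open>C\<^sub>q = \<complex>\<^sup>2\<close> exactly when \<open>q\<close> is a
  common zero of all coefficients \<open>f\<^sub>a\<^sub>b\<close>, each of degree at most \<open>d\<close>. A prime \<open>p(s,t)\<close>
  dividing every \<open>f\<^sub>a\<^sub>b\<close> would make \<open>F = p \<cdot> L\<close> Cartesian, so the \<open>f\<^sub>a\<^sub>b\<close> have no common
  factor, and a generic linear combination of them is coprime to a fixed nonzero one. Two coprime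
  curves of degree at most \<open>d\<close> meet in at most \<open>d\<^sup>2\<close> points; this Bezout bound is proved by
  comparing dimensions of spaces of polynomials of bounded degree.\<close>

section \<open>Ring homomorphisms and evaluation\<close>

definition is_ring_hom :: "('a::comm_ring_1 \<Rightarrow> 'b::comm_ring_1) \<Rightarrow> bool" where
  "is_ring_hom h \<longleftrightarrow>
    h 0 = 0 \<and> h 1 = 1 \<and> (\<forall>a b. h (a + b) = h a + h b) \<and> (\<forall>a b. h (a * b) = h a * h b)"

lemma is_ring_hom_id: "is_ring_hom (\<lambda>x. x)"
  by (simp add: is_ring_hom_def)

lemma ring_hom_mult: "is_ring_hom h \<Longrightarrow> h (a * b) = h a * h b"
  by (simp add: is_ring_hom_def)

lemma ring_hom_sum: "is_ring_hom h \<Longrightarrow> h (sum f A) = (\<Sum>a\<in>A. h (f a))"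
  by (induction A rule: infinite_finite_induct) (auto simp: is_ring_hom_def)

lemma ring_hom_prod: "is_ring_hom h \<Longrightarrow> h (prod f A) = (\<Prod>a\<in>A. h (f a))"
  by (induction A rule: infinite_finite_induct) (auto simp: is_ring_hom_def)

lemma map_poly_add_hom:
  assumes "is_ring_hom h"
  shows "map_poly h (p + q) = map_poly h p + map_poly h q"
  using assms by (intro poly_eqI) (simp add: coeff_map_poly is_ring_hom_def)

lemma map_poly_mult_hom:
  assumes h: "is_ring_hom h"
  shows "map_poly h (p * q) = map_poly h p * map_poly h q"
proof (induction p rule: pCons_induct)
  case 0
  then show ?case using h by (simp add: is_ring_hom_def map_poly_def)
next
  case (pCons a p)
  have h0: "h 0 = 0" using h by (simp add: is_ring_hom_def)
  have "map_poly h (pCons a p * q) = map_poly h (smult a q + pCons 0 (p * q))"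
    by simp
  also have "\<dots> = smult (h a) (map_poly h q) + pCons 0 (map_poly h p * map_poly h q)"
    using h pCons.IH h0 by (simp add: map_poly_add_hom map_poly_smult map_poly_pCons is_ring_hom_def)
  also have "\<dots> = map_poly h (pCons a p) * map_poly h q"
    using h0 by (simp add: map_poly_pCons)
  finally show ?case .
qed

definition poly_hom :: "('a::comm_ring_1 \<Rightarrow> 'b::comm_ring_1) \<Rightarrow> 'b \<Rightarrow> 'a poly \<Rightarrow> 'b" where
  "poly_hom h x p = poly (map_poly h p) x"

lemma is_ring_hom_poly_hom: "is_ring_hom h \<Longrightarrow> is_ring_hom (poly_hom h x)"
  unfolding is_ring_hom_def[of "poly_hom h x"] poly_hom_def
  by (auto simp: map_poly_add_hom map_poly_mult_hom is_ring_hom_def one_pCons map_poly_pCons)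

lemma poly_hom_monom: "is_ring_hom h \<Longrightarrow> poly_hom h x (monom c n) = h c * x ^ n"
  by (simp add: poly_hom_def map_poly_monom is_ring_hom_def poly_monom)

lemma poly_hom_const: "is_ring_hom h \<Longrightarrow> poly_hom h x [:c:] = h c"
  by (simp add: poly_hom_def is_ring_hom_def map_poly_pCons)

lemma poly_hom_eq_0_iff:
  fixes h :: "'a::comm_ring_1 \<Rightarrow> 'b::{idom, ring_char_0}"
  shows "is_ring_hom h \<Longrightarrow> (\<forall>x. poly_hom h x p = 0) \<longleftrightarrow> (\<forall>k. h (coeff p k) = 0)"
  unfolding poly_hom_def poly_all_0_iff_0[of "map_poly h p"]
  by (simp add: poly_eq_iff coeff_map_poly is_ring_hom_def)

section \<open>Dimension of the union of two subspaces\<close>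

context vector_space
begin

lemma card_le_dim_if_independent:
  assumes "independent I" "I \<subseteq> V" "V \<subseteq> span A" "finite A"
  shows "card I \<le> dim V"
proof -
  obtain B where B: "B \<subseteq> V" "independent B" "V \<subseteq> span B" "card B = dim V"
    by (rule basis_exists)
  have "finite B" using independent_span_bound[OF assms(4) B(2)] B(1) assms(3) by auto
  then show ?thesis using independent_span_bound[OF _ assms(1)] assms(2) B by (metis order_trans)
qed

lemma independent_Un_of_extensions:
  assumes V: "subspace V" and W: "subspace W" and VW: "V \<inter> W \<subseteq> span B"
    and BC: "B \<subseteq> C" and CV: "C \<subseteq> V" and C: "independent C" "finite C"
    and BD: "B \<subseteq> D" and DW: "D \<subseteq> W" and D: "independent D" "finite D"
  shows "independent (C \<union> D)"
proof (rule independent_if_scalars_zero)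
  show "finite (C \<union> D)" using C D by simp
  fix a v assume sum0: "(\<Sum>x\<in>C \<union> D. a x *s x) = 0" and v: "v \<in> C \<union> D"
  define u where "u = (\<Sum>x\<in>D - C. a x *s x)"
  have "(\<Sum>x\<in>C \<union> D. a x *s x) = (\<Sum>x\<in>C. a x *s x) + u"
    unfolding u_def using C(2) D(2) by (subst Un_Diff_cancel[symmetric]) (rule sum.union_disjoint; auto)
  then have sum_C: "(\<Sum>x\<in>C. a x *s x) = - u"
    using sum0 by (simp add: eq_neg_iff_add_eq_0)
  have "u \<in> W"
    unfolding u_def using DW by (intro subspace_sum[OF W] subspace_scale[OF W]) auto
  moreover have "- u \<in> V"
    unfolding sum_C[symmetric] using CV by (intro subspace_sum[OF V] subspace_scale[OF V]) auto
  then have "u \<in> V" using subspace_neg[OF V] by fastforce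
  ultimately have "u \<in> span B" using VW by blast
  then obtain e where e: "u = (\<Sum>x\<in>B. e x *s x)"
    using span_finite[of B] finite_subset[OF BC C(2)] by auto
  \<comment> \<open>\<open>u\<close> is a combination both over \<open>D - C\<close> and over \<open>B \<subseteq> C \<inter> D\<close>,
    so independence of \<open>D\<close> kills it.\<close>
  define b where "b x = (if x \<in> D - C then a x else if x \<in> B then - e x else 0)" for x
  have "(\<Sum>x\<in>D. b x *s x) = (\<Sum>x\<in>D - C. b x *s x) + (\<Sum>x\<in>D \<inter> C. b x *s x)"
    using sum.subset_diff[of "D \<inter> C" D] D(2) by (simp add: Diff_Int)
  also have "(\<Sum>x\<in>D - C. b x *s x) = u"
    unfolding u_def b_def by (intro sum.cong) auto
  also have "(\<Sum>x\<in>D \<inter> C. b x *s x) = (\<Sum>x\<in>B. b x *s x)"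
    using BC BD D(2) by (intro sum.mono_neutral_right) (auto simp: b_def)
  also have "\<dots> = (\<Sum>x\<in>B. - (e x *s x))"
    using BC by (intro sum.cong) (auto simp: b_def scale_minus_left)
  also have "\<dots> = - u"
    by (simp add: e sum_negf)
  finally have "(\<Sum>x\<in>D. b x *s x) = 0" by simp
  then have a_D: "a x = 0" if "x \<in> D - C" for x
    using independentD[OF D(1) D(2) order_refl] that by (fastforce simp: b_def)
  then have "u = 0" unfolding u_def by (intro sum.neutral) auto
  then have "(\<Sum>x\<in>C. a x *s x) = 0" using sum_C by simp
  then show "a v = 0"
    using independentD[OF C(1) C(2) order_refl] v a_D by blast
qed

lemma dim_add_le_dim_Un_Int:
  assumes V: "subspace V" and W: "subspace W" and A: "finite A" "V \<union> W \<subseteq> span A"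
  shows "dim V + dim W \<le> dim (V \<union> W) + dim (V \<inter> W)"
proof -
  obtain B where B: "B \<subseteq> V \<inter> W" "independent B" "V \<inter> W \<subseteq> span B" "card B = dim (V \<inter> W)"
    by (rule basis_exists)
  obtain C where C: "B \<subseteq> C" "C \<subseteq> V" "independent C" "V \<subseteq> span C"
    using maximal_independent_subset_extend[of B V] B(1,2) by auto
  obtain D where D: "B \<subseteq> D" "D \<subseteq> W" "independent D" "W \<subseteq> span D"
    using maximal_independent_subset_extend[of B W] B(1,2) by auto
  have "C \<subseteq> span A" "D \<subseteq> span A" using C(2) D(2) A(2) by auto
  then have fin: "finite C" "finite D"
    using independent_span_bound[OF A(1)] C(3) D(3) by auto
  have "C \<inter> D \<subseteq> B"
  proof
    fix x assume x: "x \<in> C \<inter> D"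
    show "x \<in> B"
    proof (rule ccontr)
      assume "x \<notin> B"
      then have "span B \<subseteq> span (C - {x})" using C(1) by (intro span_mono) auto
      moreover have "x \<in> span B" using x C(2) D(2) B(3) by auto
      ultimately have "dependent C" using x unfolding dependent_def by auto
      then show False using C(3) by simp
    qed
  qed
  then have "card (C \<inter> D) \<le> dim (V \<inter> W)"
    using B(4) finite_subset[OF C(1) fin(1)] card_mono by metis
  moreover have "card (C \<union> D) \<le> dim (V \<union> W)"
    using independent_Un_of_extensions[OF V W B(3) C(1-3) fin(1) D(1-3) fin(2)] C(2) D(2) A
    by (intro card_le_dim_if_independent) auto
  moreover have "card C = dim V" "card D = dim W"
    using C D by (auto intro: basis_card_eq_dim)
  ultimately show ?thesis
    using card_Un_Int[OF fin] by linarith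
qed

end

section \<open>Bivariate polynomials\<close>

text \<open>\<open>coeff (coeff p j) i\<close> is the coefficient of \<open>x\<^sup>i y\<^sup>j\<close>.\<close>

type_synonym bpoly = "complex poly poly"

definition bdegree :: "bpoly \<Rightarrow> nat" where
  "bdegree p = Max (insert 0 {i + j | i j. coeff (coeff p j) i \<noteq> 0})"

lemma finite_bpoly_support: "finite {(i, j). coeff (coeff (p::bpoly) j) i \<noteq> 0}"
proof -
  let ?B = "\<Sum>j\<le>degree p. degree (coeff p j)"
  have "i \<le> ?B \<and> j \<le> degree p" if "coeff (coeff p j) i \<noteq> 0" for i j
  proof -
    have j: "j \<le> degree p" using that le_degree[of p j] by (cases "coeff p j = 0") auto
    have "i \<le> degree (coeff p j)" using that le_degree by blast
    also have "\<dots> \<le> ?B" using j by (intro member_le_sum) auto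
    finally show ?thesis using j by auto
  qed
  then have "{(i, j). coeff (coeff p j) i \<noteq> 0} \<subseteq> {..?B} \<times> {..degree p}"
    by auto
  then show ?thesis by (rule finite_subset) auto
qed

lemma finite_bpoly_support_degrees: "finite {i + j | i j. coeff (coeff (p::bpoly) j) i \<noteq> 0}"
proof -
  have "{i + j | i j. coeff (coeff p j) i \<noteq> 0} = (\<lambda>(i, j). i + j) ` {(i, j). coeff (coeff p j) i \<noteq> 0}"
    by auto
  then show ?thesis using finite_bpoly_support by simp
qed

lemma bdegree_le_iff: "bdegree p \<le> n \<longleftrightarrow> (\<forall>i j. coeff (coeff p j) i \<noteq> 0 \<longrightarrow> i + j \<le> n)"
  unfolding bdegree_def using finite_bpoly_support_degrees[of p] by (auto simp: Max_le_iff)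

lemma le_bdegree: "coeff (coeff p j) i \<noteq> 0 \<Longrightarrow> i + j \<le> bdegree p"
  using bdegree_le_iff[of p "bdegree p"] by blast

lemma bdegree_leI: "(\<And>i j. coeff (coeff p j) i \<noteq> 0 \<Longrightarrow> i + j \<le> n) \<Longrightarrow> bdegree p \<le> n"
  using bdegree_le_iff by blast

lemma bdegree_attained:
  assumes "p \<noteq> 0"
  obtains i j where "coeff (coeff p j) i \<noteq> 0" "i + j = bdegree p"
proof -
  obtain j where j: "coeff p j \<noteq> 0" using assms by (auto simp: poly_eq_iff)
  obtain i where i: "coeff (coeff p j) i \<noteq> 0" using j by (auto simp: poly_eq_iff)
  let ?D = "{i + j | i j. coeff (coeff p j) i \<noteq> 0}"
  have "bdegree p \<in> insert 0 ?D"
    unfolding bdegree_def using finite_bpoly_support_degrees[of p] by (intro Max_in) auto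
  moreover have "i + j \<le> bdegree p" using i by (rule le_bdegree)
  ultimately consider "bdegree p \<in> ?D" | "bdegree p = 0" by (auto simp only: insert_iff)
  then show ?thesis
  proof cases
    case 1
    then obtain i' j' where "coeff (coeff p j') i' \<noteq> 0" "i' + j' = bdegree p" by auto
    then show ?thesis by (rule that)
  next
    case 2
    then show ?thesis using that i \<open>i + j \<le> bdegree p\<close> by simp
  qed
qed

lemma bdegree_add: "bdegree (p + q) \<le> max (bdegree p) (bdegree q)"
proof (rule bdegree_leI)
  fix i j assume "coeff (coeff (p + q) j) i \<noteq> 0"
  then have "coeff (coeff p j) i \<noteq> 0 \<or> coeff (coeff q j) i \<noteq> 0" by auto
  then show "i + j \<le> max (bdegree p) (bdegree q)" using le_bdegree by fastforce
qed

lemma coeff_coeff_mult: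
  "coeff (coeff (p * q) J) I = (\<Sum>j\<le>J. \<Sum>i\<le>I. coeff (coeff p j) i * coeff (coeff q (J - j)) (I - i))"
  by (simp add: coeff_mult coeff_sum)

lemma bdegree_mult_le: "bdegree (p * q) \<le> bdegree p + bdegree q"
proof (rule bdegree_leI)
  fix I J assume "coeff (coeff (p * q) J) I \<noteq> 0"
  then obtain j i where ji: "j \<le> J" "i \<le> I"
    "coeff (coeff p j) i * coeff (coeff q (J - j)) (I - i) \<noteq> 0"
    unfolding coeff_coeff_mult by (metis (no_types, lifting) atMost_iff sum.neutral)
  have "i + j \<le> bdegree p" by (rule le_bdegree) (use ji(3) in auto)
  moreover have "(I - i) + (J - j) \<le> bdegree q" by (rule le_bdegree) (use ji(3) in auto)
  ultimately show "I + J \<le> bdegree p + bdegree q" using ji by linarith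
qed

lemma bdegree_1: "bdegree 1 = 0"
proof -
  have "bdegree 1 \<le> 0" by (rule bdegree_leI) (auto simp: of_bool_def split: if_splits)
  then show ?thesis by simp
qed

lemma bdegree_prod_le: "(\<And>a. a \<in> A \<Longrightarrow> bdegree (f a) \<le> 1) \<Longrightarrow> bdegree (prod f A) \<le> card A"
proof (induction A rule: infinite_finite_induct)
  case (insert x F)
  then have "bdegree (f x) \<le> 1" "bdegree (prod f F) \<le> card F" by auto
  then show ?case using bdegree_mult_le[of "f x" "prod f F"] insert(1,2) by simp
qed (simp_all add: bdegree_1)

text \<open>Among the monomials of top total degree, the one with the largest power of \<open>y\<close>:
  the product of these leading monomials of \<open>p\<close> and \<open>q\<close> cannot cancel in \<open>p * q\<close>.\<close>

definition top_ydeg :: "bpoly \<Rightarrow> nat" where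
  "top_ydeg p = Max {j. j \<le> bdegree p \<and> coeff (coeff p j) (bdegree p - j) \<noteq> 0}"

lemma top_ydeg_spec:
  assumes "p \<noteq> 0"
  shows "top_ydeg p \<le> bdegree p" "coeff (coeff p (top_ydeg p)) (bdegree p - top_ydeg p) \<noteq> 0"
    "\<And>i j. coeff (coeff p j) i \<noteq> 0 \<Longrightarrow> i + j = bdegree p \<Longrightarrow> j \<le> top_ydeg p"
proof -
  let ?J = "{j. j \<le> bdegree p \<and> coeff (coeff p j) (bdegree p - j) \<noteq> 0}"
  have J: "j \<in> ?J" if "coeff (coeff p j) i \<noteq> 0" "i + j = bdegree p" for i j
    using that by (auto simp flip: \<open>i + j = bdegree p\<close>)
  obtain i j where "coeff (coeff p j) i \<noteq> 0" "i + j = bdegree p"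
    using bdegree_attained[OF assms] .
  then have "?J \<noteq> {}" using J by blast
  then have "top_ydeg p \<in> ?J" unfolding top_ydeg_def by (intro Max_in) auto
  then show "top_ydeg p \<le> bdegree p" "coeff (coeff p (top_ydeg p)) (bdegree p - top_ydeg p) \<noteq> 0"
    by auto
  show "j \<le> top_ydeg p" if "coeff (coeff p j) i \<noteq> 0" "i + j = bdegree p" for i j
    unfolding top_ydeg_def using J[OF that] by (intro Max_ge) auto
qed

lemma bdegree_mult:
  assumes p: "p \<noteq> 0" and q: "q \<noteq> 0"
  shows "bdegree (p * q) = bdegree p + bdegree q"
proof (rule antisym[OF bdegree_mult_le])
  define jp jq where "jp = top_ydeg p" and "jq = top_ydeg q"
  define ip iq where "ip = bdegree p - jp" and "iq = bdegree q - jq"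
  note P = top_ydeg_spec[OF p, folded jp_def] and Q = top_ydeg_spec[OF q, folded jq_def]
  let ?T = "\<lambda>i j. coeff (coeff p j) i * coeff (coeff q (jp + jq - j)) (ip + iq - i)"
  have others: "?T i j = 0" if "j \<le> jp + jq" "i \<le> ip + iq" "(i, j) \<noteq> (ip, jp)" for i j
  proof (rule ccontr)
    assume "?T i j \<noteq> 0"
    then have c: "coeff (coeff p j) i \<noteq> 0" "coeff (coeff q (jp + jq - j)) (ip + iq - i) \<noteq> 0"
      by auto
    have "i + j = bdegree p" "(ip + iq - i) + (jp + jq - j) = bdegree q"
      using le_bdegree[OF c(1)] le_bdegree[OF c(2)] that P(1) Q(1) unfolding ip_def iq_def by linarith+
    then have "j \<le> jp" "jp + jq - j \<le> jq" using P(3) Q(3) c by blast+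
    then show False using that \<open>i + j = bdegree p\<close> unfolding ip_def by auto
  qed
  have "coeff (coeff (p * q) (jp + jq)) (ip + iq) = (\<Sum>j\<le>jp + jq. \<Sum>i\<le>ip + iq. ?T i j)"
    by (rule coeff_coeff_mult)
  also have "\<dots> = (\<Sum>j\<le>jp + jq. \<Sum>i\<le>ip + iq. if i = ip then if j = jp then ?T ip jp else 0 else 0)"
  proof (intro sum.cong refl)
    fix i j assume "j \<in> {..jp + jq}" "i \<in> {..ip + iq}"
    then show "?T i j = (if i = ip then if j = jp then ?T ip jp else 0 else 0)"
      using others[of j i] by (cases "(i, j) = (ip, jp)") (auto simp del: mult_eq_0_iff)
  qed
  also have "\<dots> = ?T ip jp"
    by simp
  also have "\<dots> \<noteq> 0" using P(2) Q(2) unfolding ip_def iq_def by simp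
  finally have "ip + iq + (jp + jq) \<le> bdegree (p * q)" by (rule le_bdegree)
  then show "bdegree p + bdegree q \<le> bdegree (p * q)"
    using P(1) Q(1) unfolding ip_def iq_def by linarith
qed

definition bsmult :: "complex \<Rightarrow> bpoly \<Rightarrow> bpoly" where
  "bsmult c p = smult [:c:] p"

lemma coeff_coeff_bsmult [simp]: "coeff (coeff (bsmult c p) j) i = c * coeff (coeff p j) i"
  by (simp add: bsmult_def)

lemma bsmult_mult_right: "bsmult c (h * p) = h * bsmult c p"
  by (simp add: bsmult_def mult_smult_right)

lemma bdegree_bsmult: "bdegree (bsmult c p) \<le> bdegree p"
  by (rule bdegree_leI) (auto intro: le_bdegree)

interpretation bpoly: vector_space bsmult
proof unfold_locales
  fix a b :: complex and x y :: bpoly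
  show "bsmult a (x + y) = bsmult a x + bsmult a y"
    by (simp add: bsmult_def smult_add_right)
  show "bsmult (a + b) x = bsmult a x + bsmult b x"
    using smult_add_left[of "[:a:]" "[:b:]" x] by (simp add: bsmult_def)
  show "bsmult a (bsmult b x) = bsmult (a * b) x"
    by (simp add: bsmult_def mult.commute)
  show "bsmult 1 x = x"
    by (simp add: bsmult_def flip: one_pCons)
qed

definition bmonom :: "nat \<times> nat \<Rightarrow> bpoly" where
  "bmonom e = monom (monom 1 (fst e)) (snd e)"

definition exps_le :: "nat \<Rightarrow> (nat \<times> nat) set" where
  "exps_le k = {e. fst e + snd e \<le> k}"

definition deg_le :: "nat \<Rightarrow> bpoly set" where
  "deg_le k = {p. bdegree p \<le> k}"

lemma coeff_coeff_bmonom: "coeff (coeff (bmonom e) j) i = (if (i, j) = e then 1 else 0)"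
  by (cases e) (auto simp: bmonom_def coeff_monom)

lemma bsmult_bmonom: "bsmult c (bmonom e) = monom (monom c (fst e)) (snd e)"
  by (simp add: bsmult_def bmonom_def smult_monom)

lemma inj_bmonom: "inj bmonom"
proof (rule injI)
  fix e e' assume "bmonom e = bmonom e'"
  then have "coeff (coeff (bmonom e) (snd e')) (fst e') = 1"
    by (simp add: coeff_coeff_bmonom)
  then show "e = e'" by (simp add: coeff_coeff_bmonom split: if_splits)
qed

lemma inj_on_mult_bmonom: "h \<noteq> 0 \<Longrightarrow> inj_on (\<lambda>e. h * bmonom e) A"
  using inj_bmonom by (auto simp: inj_on_def inj_def)

lemma bdegree_bmonom: "bdegree (bmonom e) \<le> fst e + snd e"
  by (rule bdegree_leI) (auto simp: coeff_coeff_bmonom split: if_splits)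

lemma finite_exps_le [simp]: "finite (exps_le k)"
proof -
  have "exps_le k \<subseteq> {..k} \<times> {..k}" by (auto simp: exps_le_def)
  then show ?thesis by (rule finite_subset) auto
qed

lemma card_exps_le: "2 * card (exps_le k) = (k + 1) * (k + 2)"
proof (induction k)
  case 0
  have "exps_le 0 = {(0, 0)}" by (auto simp: exps_le_def)
  then show ?case by simp
next
  case (Suc k)
  let ?diag = "(\<lambda>i. (i, Suc k - i)) ` {..Suc k}"
  have "exps_le (Suc k) = exps_le k \<union> ?diag"
    by (auto simp: exps_le_def image_iff intro!: bexI[where x = "fst _"])
  moreover have "exps_le k \<inter> ?diag = {}" by (auto simp: exps_le_def)
  moreover have "card ?diag = Suc k + 1" by (subst card_image) (auto simp: inj_on_def)
  ultimately have "card (exps_le (Suc k)) = card (exps_le k) + (Suc k + 1)"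
    by (simp add: card_Un_disjoint)
  with Suc show ?case by simp
qed

lemma coeff_coeff_sum_bmonom:
  assumes "finite A"
  shows "coeff (coeff (\<Sum>e\<in>A. bsmult (c e) (bmonom e)) j) i = (if (i, j) \<in> A then c (i, j) else 0)"
  using assms by (simp add: coeff_sum coeff_coeff_bmonom if_distrib[of "\<lambda>x. _ * x"] sum.If_cases)

lemma bmonom_expansion:
  assumes "p \<in> deg_le k"
  shows "p = (\<Sum>e\<in>exps_le k. bsmult (coeff (coeff p (snd e)) (fst e)) (bmonom e))"
proof (intro poly_eqI)
  fix j i
  show "coeff (coeff p j) i =
      coeff (coeff (\<Sum>e\<in>exps_le k. bsmult (coeff (coeff p (snd e)) (fst e)) (bmonom e)) j) i"
    using assms by (simp add: coeff_coeff_sum_bmonom) (auto simp: exps_le_def deg_le_def bdegree_le_iff)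
qed

lemma subspace_mult_deg_le: "bpoly.subspace ((*) h ` deg_le m)"
  unfolding bpoly.subspace_def
proof (intro conjI ballI allI)
  show "0 \<in> (*) h ` deg_le m" by (force simp: deg_le_def bdegree_le_iff)
  fix x y assume "x \<in> (*) h ` deg_le m" "y \<in> (*) h ` deg_le m"
  then obtain a b where "a \<in> deg_le m" "b \<in> deg_le m" "x = h * a" "y = h * b" by auto
  then show "x + y \<in> (*) h ` deg_le m"
    using bdegree_add[of a b] by (intro image_eqI[of _ _ "a + b"]) (auto simp: deg_le_def distrib_left)
next
  fix c x assume "x \<in> (*) h ` deg_le m"
  then obtain a where "a \<in> deg_le m" "x = h * a" by auto
  then show "bsmult c x \<in> (*) h ` deg_le m"
    by (intro image_eqI[of _ _ "bsmult c a"])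
      (auto simp: deg_le_def bsmult_mult_right bdegree_le_iff)
qed

lemma mult_deg_le_subset_span: "(*) h ` deg_le m \<subseteq> bpoly.span ((\<lambda>e. h * bmonom e) ` exps_le m)"
proof
  fix p assume "p \<in> (*) h ` deg_le m"
  then obtain a where a: "a \<in> deg_le m" "p = h * a" by auto
  have "p = (\<Sum>e\<in>exps_le m. bsmult (coeff (coeff a (snd e)) (fst e)) (h * bmonom e))"
    unfolding a(2) by (subst bmonom_expansion[OF a(1)]) (simp add: sum_distrib_left bsmult_mult_right)
  also have "\<dots> \<in> bpoly.span ((\<lambda>e. h * bmonom e) ` exps_le m)"
    by (intro bpoly.span_sum bpoly.span_scale bpoly.span_base) auto
  finally show "p \<in> bpoly.span ((\<lambda>e. h * bmonom e) ` exps_le m)" .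
qed

lemma independent_mult_bmonom:
  assumes h: "h \<noteq> 0"
  shows "bpoly.independent ((\<lambda>e. h * bmonom e) ` exps_le m)" (is "bpoly.independent ?B")
proof (rule bpoly.independent_if_scalars_zero)
  show "finite ?B" by simp
  fix u v assume sum0: "(\<Sum>x\<in>?B. bsmult (u x) x) = 0" and v: "v \<in> ?B"
  have "h * (\<Sum>e\<in>exps_le m. bsmult (u (h * bmonom e)) (bmonom e)) = 0"
    using sum0 by (simp add: sum.reindex[OF inj_on_mult_bmonom[OF h]] sum_distrib_left bsmult_mult_right)
  then have "(\<Sum>e\<in>exps_le m. bsmult (u (h * bmonom e)) (bmonom e)) = 0" using h by simp
  moreover obtain e where "e \<in> exps_le m" "v = h * bmonom e" using v by auto
  ultimately show "u v = 0"
    using coeff_coeff_sum_bmonom[of "exps_le m" "\<lambda>e. u (h * bmonom e)" "snd e" "fst e"] by simp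
qed

lemma dim_mult_deg_le:
  assumes "h \<noteq> 0"
  shows "bpoly.dim ((*) h ` deg_le m) = card (exps_le m)"
proof (rule bpoly.dim_unique)
  show "(\<lambda>e. h * bmonom e) ` exps_le m \<subseteq> (*) h ` deg_le m"
    using bdegree_bmonom by (auto simp: deg_le_def exps_le_def intro: order_trans)
  show "card ((\<lambda>e. h * bmonom e) ` exps_le m) = card (exps_le m)"
    using assms by (intro card_image inj_on_mult_bmonom)
qed (use mult_deg_le_subset_span independent_mult_bmonom[OF assms] in auto)

section \<open>Bezout's bound\<close>

definition beval :: "complex \<times> complex \<Rightarrow> bpoly \<Rightarrow> complex" where
  "beval z = poly_hom (poly_hom (\<lambda>c. c) (fst z)) (snd z)"

lemma is_ring_hom_beval: "is_ring_hom (beval z)"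
  unfolding beval_def by (intro is_ring_hom_poly_hom is_ring_hom_id)

lemma beval_add: "beval z (p + q) = beval z p + beval z q"
  using is_ring_hom_beval by (simp add: is_ring_hom_def)

lemma beval_mult: "beval z (p * q) = beval z p * beval z q"
  using is_ring_hom_beval by (rule ring_hom_mult)

lemma beval_sum: "beval z (sum f A) = (\<Sum>a\<in>A. beval z (f a))"
  using is_ring_hom_beval by (rule ring_hom_sum)

lemma beval_prod: "beval z (prod f A) = (\<Prod>a\<in>A. beval z (f a))"
  using is_ring_hom_beval by (rule ring_hom_prod)

lemma beval_const: "beval z [:q:] = poly q (fst z)"
  unfolding beval_def
  by (subst poly_hom_const[OF is_ring_hom_poly_hom[OF is_ring_hom_id]]) (simp add: poly_hom_def)

lemma beval_bsmult: "beval z (bsmult c p) = c * beval z p"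
proof -
  have "bsmult c p = [:[:c:]:] * p" by (simp add: bsmult_def)
  then have "beval z (bsmult c p) = beval z [:[:c:]:] * beval z p" by (simp only: beval_mult)
  then show ?thesis by (simp add: beval_const)
qed

lemma beval_linear_y: "beval z [:[:c:], [:1:]:] = c + snd z"
  by (simp add: beval_def poly_hom_def map_poly_pCons)

text \<open>The line \<open>x = x\<^sub>w\<close> or \<open>y = y\<^sub>w\<close> through \<open>w\<close>, chosen to miss \<open>z \<noteq> w\<close>.\<close>

definition separating_line :: "complex \<times> complex \<Rightarrow> complex \<times> complex \<Rightarrow> bpoly" where
  "separating_line z w =
    (if fst z \<noteq> fst w then [:[:- fst w, 1:]:] else [:[:- snd w:], [:1:]:])"

lemma beval_separating_line: "beval w (separating_line z w) = 0"
  by (auto simp: separating_line_def beval_const beval_linear_y)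

lemma beval_separating_line_nonzero: "w \<noteq> z \<Longrightarrow> beval z (separating_line z w) \<noteq> 0"
  by (auto simp: separating_line_def beval_const beval_linear_y prod_eq_iff)

lemma bdegree_separating_line: "bdegree (separating_line z w) \<le> 1"
  by (rule bdegree_leI) (auto simp: separating_line_def coeff_pCons split: if_splits nat.splits)

definition lagrange :: "(complex \<times> complex) set \<Rightarrow> complex \<times> complex \<Rightarrow> bpoly" where
  "lagrange Z z = (\<Prod>w\<in>Z - {z}. separating_line z w)"

lemma beval_lagrange_self: "finite Z \<Longrightarrow> beval z (lagrange Z z) \<noteq> 0"
  by (auto simp: lagrange_def beval_prod beval_separating_line_nonzero)

lemma beval_lagrange_other: "finite Z \<Longrightarrow> w \<in> Z \<Longrightarrow> w \<noteq> z \<Longrightarrow> beval w (lagrange Z z) = 0"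
  unfolding lagrange_def beval_prod
  by (intro prod_zero bexI[of _ w]) (auto simp: beval_separating_line)

lemma bdegree_lagrange: "finite Z \<Longrightarrow> bdegree (lagrange Z z) \<le> card Z"
  unfolding lagrange_def using bdegree_prod_le[of "Z - {z}"] bdegree_separating_line
  by (meson card_Diff1_le order_trans)

lemma independent_Un_lagrange:
  assumes U: "bpoly.independent U" "finite U" and Z: "finite Z"
    and vanish: "\<And>u z. u \<in> U \<Longrightarrow> z \<in> Z \<Longrightarrow> beval z u = 0"
  shows "bpoly.independent (U \<union> lagrange Z ` Z)"
proof (rule bpoly.independent_if_scalars_zero)
  show fin: "finite (U \<union> lagrange Z ` Z)" using U Z by simp
  fix a v assume sum0: "(\<Sum>x\<in>U \<union> lagrange Z ` Z. bsmult (a x) x) = 0"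
    and v: "v \<in> U \<union> lagrange Z ` Z"
  \<comment> \<open>Evaluating at \<open>z\<close> isolates the coefficient of \<open>lagrange Z z\<close>.\<close>
  have a_lagrange: "a (lagrange Z z) = 0" if z: "z \<in> Z" for z
  proof -
    have "beval z x = 0" if "x \<in> U \<union> lagrange Z ` Z - {lagrange Z z}" for x
    proof -
      from that consider "x \<in> U" | w where "w \<in> Z" "w \<noteq> z" "x = lagrange Z w" by auto
      then show ?thesis by cases (auto simp: vanish z beval_lagrange_other[OF Z])
    qed
    then have "0 = a (lagrange Z z) * beval z (lagrange Z z)"
      using arg_cong[OF sum0, of "beval z"] fin z
      by (simp add: beval_sum beval_bsmult sum.remove[of _ "lagrange Z z"]
          is_ring_hom_beval[unfolded is_ring_hom_def])
    then show ?thesis using beval_lagrange_self[OF Z] by simp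
  qed
  have "(\<Sum>x\<in>U \<union> lagrange Z ` Z. bsmult (a x) x) = (\<Sum>x\<in>U. bsmult (a x) x)"
    using fin a_lagrange by (intro sum.mono_neutral_right) auto
  then have "(\<Sum>x\<in>U. bsmult (a x) x) = 0" using sum0 by simp
  then show "a v = 0"
    using bpoly.independentD[OF U(1) U(2) order_refl] v a_lagrange by blast
qed

lemma inj_on_lagrange:
  assumes "finite Z"
  shows "inj_on (lagrange Z) Z"
proof (rule inj_onI, rule ccontr)
  fix z w assume "z \<in> Z" "w \<in> Z" "lagrange Z z = lagrange Z w" "z \<noteq> w"
  then show False
    using beval_lagrange_other[OF assms, of z w] beval_lagrange_self[OF assms, of z] by simp
qed

lemma deg_le_subset_span: "deg_le n \<subseteq> bpoly.span (bmonom ` exps_le n)"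
  using mult_deg_le_subset_span[of 1 n] by simp

lemma dim_vanishing_add_card_le:
  assumes Z: "finite Z" "card Z \<le> n" and V: "V \<subseteq> deg_le n"
    and vanish: "\<And>p z. p \<in> V \<Longrightarrow> z \<in> Z \<Longrightarrow> beval z p = 0"
  shows "bpoly.dim V + card Z \<le> card (exps_le n)"
proof -
  obtain U where U: "U \<subseteq> V" "bpoly.independent U" "V \<subseteq> bpoly.span U" "card U = bpoly.dim V"
    by (rule bpoly.basis_exists)
  have "U \<union> lagrange Z ` Z \<subseteq> deg_le n"
    using U(1) V le_trans[OF bdegree_lagrange[OF Z(1)] Z(2)] by (auto simp: deg_le_def)
  then have span: "U \<union> lagrange Z ` Z \<subseteq> bpoly.span (bmonom ` exps_le n)"
    using deg_le_subset_span by (rule order_trans)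
  have fin: "finite (bmonom ` exps_le n)" by simp
  have "finite U"
    using bpoly.independent_span_bound[OF fin U(2)] span by auto
  have disjoint: "U \<inter> lagrange Z ` Z = {}"
  proof (rule ccontr)
    assume "U \<inter> lagrange Z ` Z \<noteq> {}"
    then obtain z where "z \<in> Z" "lagrange Z z \<in> V" using U(1) by auto
    then show False using vanish beval_lagrange_self[OF Z(1)] by blast
  qed
  have "bpoly.independent (U \<union> lagrange Z ` Z)"
    using U(1) by (intro independent_Un_lagrange[OF U(2) \<open>finite U\<close> Z(1)] vanish) auto
  then have "card (U \<union> lagrange Z ` Z) \<le> card (bmonom ` exps_le n)"
    using bpoly.independent_span_bound[OF fin _ span] by simp
  also have "\<dots> \<le> card (exps_le n)" by (rule card_image_le) simp
  finally show ?thesis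
    using disjoint \<open>finite U\<close> Z(1) U(4) card_image[OF inj_on_lagrange[OF Z(1)]]
    by (simp add: card_Un_disjoint)
qed

lemma mult_deg_le_subset:
  assumes "m + bdegree h \<le> n"
  shows "(*) h ` deg_le m \<subseteq> deg_le n"
proof
  fix p assume "p \<in> (*) h ` deg_le m"
  then obtain a where "bdegree a \<le> m" "p = h * a" by (auto simp: deg_le_def)
  then show "p \<in> deg_le n" using bdegree_mult_le[of h a] assms by (simp add: deg_le_def)
qed

lemma mult_deg_le_Int_subset:
  assumes f: "f \<noteq> 0" and g: "g \<noteq> 0" and "coprime f g" and "bdegree f + bdegree g \<le> n"
  shows "(*) f ` deg_le (n - bdegree f) \<inter> (*) g ` deg_le (n - bdegree g)
    \<subseteq> (*) (f * g) ` deg_le (n - bdegree f - bdegree g)"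
proof
  fix p assume "p \<in> (*) f ` deg_le (n - bdegree f) \<inter> (*) g ` deg_le (n - bdegree g)"
  then obtain a b where a: "bdegree a \<le> n - bdegree f" and p: "p = f * a" "p = g * b"
    unfolding deg_le_def by blast
  then have "g dvd a * f" by (metis dvd_triv_left mult.commute)
  then obtain c where c: "a = g * c"
    using \<open>coprime f g\<close> by (auto simp: coprime_commute coprime_dvd_mult_left_iff elim: dvdE)
  have "bdegree c \<le> n - bdegree f - bdegree g"
  proof (cases "c = 0")
    case False
    then show ?thesis using a c bdegree_mult[OF g False] by simp
  qed (simp add: bdegree_le_iff)
  then show "p \<in> (*) (f * g) ` deg_le (n - bdegree f - bdegree g)"
    using p(1) c by (auto simp: deg_le_def ac_simps)
qed

text \<open>Count dimensions inside \<open>deg_le n\<close> for \<open>n = deg f + deg g + card Z\<close>: the multiples of \<open>f\<close>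
  and of \<open>g\<close> intersect only in multiples of \<open>f * g\<close>, their span vanishes on \<open>Z\<close>, and the Lagrange
  polynomials of \<open>Z\<close> are independent from it; comparing with \<open>dim (deg_le n)\<close> gives the bound.\<close>

theorem bezout_card_common_zeros:
  assumes f: "f \<noteq> 0" and g: "g \<noteq> 0" and "coprime f g" and Z: "finite Z"
    and vanish_f: "\<And>z. z \<in> Z \<Longrightarrow> beval z f = 0" and vanish_g: "\<And>z. z \<in> Z \<Longrightarrow> beval z g = 0"
  shows "card Z \<le> bdegree f * bdegree g"
proof -
  define k n where "k = card Z" and "n = bdegree f + bdegree g + k"
  define Mf Mg where "Mf = (*) f ` deg_le (n - bdegree f)" and "Mg = (*) g ` deg_le (n - bdegree g)"
  have M_subset: "Mf \<union> Mg \<subseteq> deg_le n"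
    unfolding Mf_def Mg_def by (intro Un_least mult_deg_le_subset) (simp_all add: n_def)
  have "bpoly.dim (Mf \<inter> Mg) \<le> card ((\<lambda>e. f * g * bmonom e) ` exps_le k)"
  proof (rule bpoly.dim_le_card)
    have "Mf \<inter> Mg \<subseteq> (*) (f * g) ` deg_le k"
      using mult_deg_le_Int_subset[OF f g \<open>coprime f g\<close>, of n] by (simp add: Mf_def Mg_def n_def)
    then show "Mf \<inter> Mg \<subseteq> bpoly.span ((\<lambda>e. f * g * bmonom e) ` exps_le k)"
      using mult_deg_le_subset_span by (rule order_trans)
  qed simp
  also have "\<dots> \<le> card (exps_le k)" by (rule card_image_le) simp
  finally have dim_Int: "bpoly.dim (Mf \<inter> Mg) \<le> card (exps_le k)" .
  have "bpoly.dim Mf + bpoly.dim Mg \<le> bpoly.dim (Mf \<union> Mg) + bpoly.dim (Mf \<inter> Mg)"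
    by (rule bpoly.dim_add_le_dim_Un_Int[OF _ _ _ order_trans[OF M_subset deg_le_subset_span]])
      (simp_all add: Mf_def Mg_def subspace_mult_deg_le)
  moreover have "bpoly.dim Mf = card (exps_le (bdegree g + k))" "bpoly.dim Mg = card (exps_le (bdegree f + k))"
    using dim_mult_deg_le[OF f] dim_mult_deg_le[OF g] by (simp_all add: Mf_def Mg_def n_def)
  moreover have "bpoly.dim (Mf \<union> Mg) + k \<le> card (exps_le n)"
    unfolding k_def using Z M_subset
    by (intro dim_vanishing_add_card_le) (auto simp: n_def k_def Mf_def Mg_def beval_mult vanish_f vanish_g)
  ultimately have "2 * k + 2 * card (exps_le (bdegree g + k)) + 2 * card (exps_le (bdegree f + k))
      \<le> 2 * card (exps_le n) + 2 * card (exps_le k)"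
    using dim_Int by linarith
  then show ?thesis
    unfolding card_exps_le k_def n_def by (simp add: algebra_simps)
qed

section \<open>A coprime pair in a family without common factor\<close>

lemma coprime_if_no_common_prime_factor:
  fixes a b :: "'a::factorial_semiring_gcd"
  assumes "a \<noteq> 0" and "\<And>p. p \<in> prime_factors a \<Longrightarrow> \<not> p dvd b"
  shows "coprime a b"
proof (rule ccontr)
  assume "\<not> coprime a b"
  then obtain c where c: "c dvd a" "c dvd b" "\<not> is_unit c" by (rule not_coprimeE)
  then have "c \<noteq> 0" using \<open>a \<noteq> 0\<close> by auto
  then obtain p where "p dvd c" "prime p" using prime_divisor_exists c(3) by blast
  then show False using assms c by (auto simp: in_prime_factors_iff intro: dvd_trans)
qed

lemma dvd_bsmultD:
  assumes "c \<noteq> 0" and "q dvd bsmult c f"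
  shows "q dvd f"
proof -
  have "q dvd bsmult (inverse c) (bsmult c f)"
    using assms(2) unfolding bsmult_def[of "inverse c"] by (rule dvd_smult)
  then show ?thesis using assms(1) by simp
qed

lemma finite_dvd_add_bsmult:
  assumes "\<not> q dvd g"
  shows "finite {c. q dvd g + bsmult c f}"
proof -
  have unique: "c = c'" if "q dvd g + bsmult c f" "q dvd g + bsmult c' f" for c c'
  proof (rule ccontr)
    assume "c \<noteq> c'"
    have "g + bsmult c f - (g + bsmult c' f) = bsmult (c - c') f"
      unfolding add_diff_cancel_left by (rule bpoly.scale_left_diff_distrib[symmetric])
    then have "q dvd bsmult (c - c') f" using dvd_diff[OF that] by simp
    then have "q dvd f" by (rule dvd_bsmultD[rotated]) (use \<open>c \<noteq> c'\<close> in simp)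
    then have "q dvd bsmult c f" unfolding bsmult_def by (rule dvd_smult)
    with that(1) have "q dvd (g + bsmult c f) - bsmult c f" by (rule dvd_diff)
    then show False using assms unfolding add_diff_cancel by blast
  qed
  show ?thesis
  proof (cases "\<exists>c0. q dvd g + bsmult c0 f")
    case True
    then obtain c0 where "q dvd g + bsmult c0 f" by blast
    then have "{c. q dvd g + bsmult c f} \<subseteq> {c0}" using unique by blast
    then show ?thesis by (rule finite_subset) simp
  qed simp
qed

text \<open>General position: moving \<open>g\<close> along a member of the family not divisible by \<open>p\<close> by a generic
  scalar removes the factor \<open>p\<close> without creating any of finitely many other factors.\<close>

lemma exists_combination_not_dvd:
  fixes fam :: "'i \<Rightarrow> bpoly"
  assumes "finite P" and P: "\<And>p. p \<in> P \<Longrightarrow> \<exists>i. \<not> p dvd fam i"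
    and "g0 \<in> G" and G: "\<And>g i c. g \<in> G \<Longrightarrow> g + bsmult c (fam i) \<in> G"
  shows "\<exists>g\<in>G. \<forall>p\<in>P. \<not> p dvd g"
  using assms(1,2)
proof (induction P rule: finite_induct)
  case empty
  then show ?case using \<open>g0 \<in> G\<close> by auto
next
  case (insert p P)
  then obtain g where g: "g \<in> G" "\<forall>q\<in>P. \<not> q dvd g" by auto
  show ?case
  proof (cases "p dvd g")
    case False
    then show ?thesis using g by auto
  next
    case True
    obtain i where i: "\<not> p dvd fam i" using insert.prems by auto
    have "finite (insert 0 (\<Union>q\<in>P. {c. q dvd g + bsmult c (fam i)}))"
      using insert.hyps(1) g(2) finite_dvd_add_bsmult by auto
    then obtain c where "c \<notin> insert 0 (\<Union>q\<in>P. {c. q dvd g + bsmult c (fam i)})"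
      using ex_new_if_finite[OF infinite_UNIV_char_0] by blast
    then have c: "c \<noteq> 0" "\<And>q. q \<in> P \<Longrightarrow> \<not> q dvd g + bsmult c (fam i)" by auto
    have "\<not> p dvd g + bsmult c (fam i)"
    proof
      assume "p dvd g + bsmult c (fam i)"
      then have "p dvd (g + bsmult c (fam i)) - g" using True by (rule dvd_diff)
      then have "p dvd bsmult c (fam i)" unfolding add_diff_cancel_left' .
      then show False using i dvd_bsmultD[OF c(1)] by blast
    qed
    with c(2) show ?thesis by (intro bexI[OF _ G[OF g(1), of c i]]) auto
  qed
qed

lemma beval_unit_nonzero:
  assumes "is_unit f"
  shows "beval z f \<noteq> 0"
proof -
  obtain u where u: "1 = f * u" using assms by (rule dvdE)
  have "1 = beval z (f * u)" unfolding u[symmetric] using is_ring_hom_beval by (simp add: is_ring_hom_def)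
  then show ?thesis by (auto simp: beval_mult)
qed

lemma exists_coprime_vanishing_pair:
  fixes fam :: "'i \<Rightarrow> bpoly"
  assumes "fam i0 \<noteq> 0" and no_common_prime: "\<And>p. prime p \<Longrightarrow> \<exists>i. \<not> p dvd fam i"
    and deg: "\<And>i. bdegree (fam i) \<le> d" and vanish: "\<And>i z. z \<in> Z \<Longrightarrow> beval z (fam i) = 0"
    and "Z \<noteq> {}"
  obtains f g where "f \<noteq> 0" "g \<noteq> 0" "coprime f g" "bdegree f \<le> d" "bdegree g \<le> d"
    "\<And>z. z \<in> Z \<Longrightarrow> beval z f = 0" "\<And>z. z \<in> Z \<Longrightarrow> beval z g = 0"
proof -
  define G where "G = {g. bdegree g \<le> d \<and> (\<forall>z\<in>Z. beval z g = 0)}"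
  have "\<exists>g\<in>G. \<forall>p\<in>prime_factors (fam i0). \<not> p dvd g"
  proof (rule exists_combination_not_dvd)
    show "fam i0 \<in> G" using deg vanish by (simp add: G_def)
    show "g + bsmult c (fam i) \<in> G" if "g \<in> G" for g i c
    proof -
      have "bdegree (g + bsmult c (fam i)) \<le> d"
        using that bdegree_add[of g "bsmult c (fam i)"] bdegree_bsmult[of c "fam i"] deg[of i]
        by (auto simp: G_def)
      then show ?thesis using that vanish by (simp add: G_def beval_add beval_bsmult)
    qed
    show "\<exists>i. \<not> p dvd fam i" if "p \<in> prime_factors (fam i0)" for p
      using that no_common_prime in_prime_factors_imp_prime by blast
  qed simp
  then obtain g where g: "g \<in> G" "\<forall>p\<in>prime_factors (fam i0). \<not> p dvd g" ..
  have "\<not> is_unit (fam i0)"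
    using \<open>Z \<noteq> {}\<close> vanish beval_unit_nonzero by blast
  then obtain p where "p dvd fam i0" "prime p"
    using prime_divisor_exists[OF \<open>fam i0 \<noteq> 0\<close>] by blast
  then have "p \<in> prime_factors (fam i0)"
    using \<open>fam i0 \<noteq> 0\<close> by (intro in_prime_factors_iff[THEN iffD2] conjI)
  then have "g \<noteq> 0" using g(2) dvd_0_right by blast
  moreover have "coprime (fam i0) g"
    using \<open>fam i0 \<noteq> 0\<close> g(2) by (intro coprime_if_no_common_prime_factor) blast+
  ultimately show ?thesis
    using that \<open>fam i0 \<noteq> 0\<close> deg vanish g(1) by (auto simp: G_def)
qed

section \<open>Coefficients of \<open>F\<close> with respect to \<open>x\<close> and \<open>y\<close>\<close>

text \<open>\<open>nested F \<in> \<complex>[s][t][x][y]\<close> is \<open>F\<close> rewritten as a polynomial in \<open>y\<close> over \<open>x\<close> over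
  the bivariate ring in \<open>s, t\<close>; \<open>xy_coeff F (a, b)\<close> is its coefficient of \<open>x\<^sup>a y\<^sup>b\<close>, a \<open>bpoly\<close>
  whose two variables are \<open>s\<close> and \<open>t\<close>.\<close>

type_synonym qpoly = "bpoly poly poly"

lemma UNIV_vr: "(UNIV :: vr set) = {X, Y, S, T}"
  using vr.exhaust by auto

lemma finite_UNIV_vr [simp]: "finite (UNIV :: vr set)"
  by (simp add: UNIV_vr)

definition exp4 :: "nat \<Rightarrow> nat \<Rightarrow> nat \<Rightarrow> nat \<Rightarrow> vr \<Rightarrow>\<^sub>0 nat" where
  "exp4 i j a b =
    Poly_Mapping.single S i + Poly_Mapping.single T j + Poly_Mapping.single X a + Poly_Mapping.single Y b"

lemma lookup_exp4:
  "Poly_Mapping.lookup (exp4 i j a b) S = i" "Poly_Mapping.lookup (exp4 i j a b) T = j"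
  "Poly_Mapping.lookup (exp4 i j a b) X = a" "Poly_Mapping.lookup (exp4 i j a b) Y = b"
  by (simp_all add: exp4_def lookup_add lookup_single)

lemma exp4_eq_iff:
  "m = exp4 i j a b \<longleftrightarrow>
    Poly_Mapping.lookup m S = i \<and> Poly_Mapping.lookup m T = j \<and>
    Poly_Mapping.lookup m X = a \<and> Poly_Mapping.lookup m Y = b" (is "_ \<longleftrightarrow> ?lookups")
proof
  assume ?lookups
  show "m = exp4 i j a b"
  proof (rule poly_mapping_eqI)
    fix v
    show "Poly_Mapping.lookup m v = Poly_Mapping.lookup (exp4 i j a b) v"
      using \<open>?lookups\<close> by (cases v) (simp_all add: lookup_exp4)
  qed
qed (simp add: lookup_exp4)

lemma exp4_lookup:
  "m = exp4 (Poly_Mapping.lookup m S) (Poly_Mapping.lookup m T) (Poly_Mapping.lookup m X) (Poly_Mapping.lookup m Y)"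
  by (simp add: exp4_eq_iff)

definition nested_monom :: "(vr \<Rightarrow>\<^sub>0 nat) \<Rightarrow> complex \<Rightarrow> qpoly" where
  "nested_monom m c =
    monom (monom (monom (monom c (Poly_Mapping.lookup m S)) (Poly_Mapping.lookup m T))
      (Poly_Mapping.lookup m X)) (Poly_Mapping.lookup m Y)"

definition nested :: "mpoly4 \<Rightarrow> qpoly" where
  "nested F = (\<Sum>m\<in>Poly_Mapping.keys F. nested_monom m (Poly_Mapping.lookup F m))"

definition xy_coeff :: "mpoly4 \<Rightarrow> nat \<times> nat \<Rightarrow> bpoly" where
  "xy_coeff F ab = coeff (coeff (nested F) (snd ab)) (fst ab)"

lemma coeff_nested_monom:
  "coeff (coeff (coeff (coeff (nested_monom m c) b) a) j) i = (if m = exp4 i j a b then c else 0)"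
  by (simp add: nested_monom_def coeff_monom exp4_eq_iff)

lemma coeff_nested:
  "coeff (coeff (coeff (coeff (nested F) b) a) j) i = Poly_Mapping.lookup F (exp4 i j a b)"
proof -
  have "coeff (coeff (coeff (coeff (nested F) b) a) j) i =
        (\<Sum>m\<in>Poly_Mapping.keys F. if m = exp4 i j a b then Poly_Mapping.lookup F m else 0)"
    by (simp add: nested_def coeff_sum coeff_nested_monom)
  also have "\<dots> = (if exp4 i j a b \<in> Poly_Mapping.keys F then Poly_Mapping.lookup F (exp4 i j a b) else 0)"
    by (simp add: sum.delta')
  also have "\<dots> = Poly_Mapping.lookup F (exp4 i j a b)" by (simp add: in_keys_iff)
  finally show ?thesis .
qed

lemma coeff_coeff_xy_coeff: "coeff (coeff (xy_coeff F (a, b)) j) i = Poly_Mapping.lookup F (exp4 i j a b)"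
  by (simp add: xy_coeff_def coeff_nested)

lemma mon_deg_exp4: "mon_deg (exp4 i j a b) = i + j + a + b"
proof -
  have "mon_deg (exp4 i j a b) = (\<Sum>v\<in>UNIV. Poly_Mapping.lookup (exp4 i j a b) v)"
    unfolding mon_deg_def by (rule sum.mono_neutral_left) (auto simp: in_keys_iff)
  also have "\<dots> = i + j + a + b" by (simp add: UNIV_vr lookup_exp4)
  finally show ?thesis .
qed

lemma mon_deg_le_total_degree: "m \<in> Poly_Mapping.keys F \<Longrightarrow> mon_deg m \<le> total_degree F"
  unfolding total_degree_def by (rule Max_ge) auto

lemma bdegree_xy_coeff: "bdegree (xy_coeff F ab) \<le> total_degree F"
proof (rule bdegree_leI)
  fix i j assume "coeff (coeff (xy_coeff F ab) j) i \<noteq> 0"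
  then have "exp4 i j (fst ab) (snd ab) \<in> Poly_Mapping.keys F"
    using coeff_coeff_xy_coeff[of F "fst ab" "snd ab" j i] by (simp add: in_keys_iff)
  then have "mon_deg (exp4 i j (fst ab) (snd ab)) \<le> total_degree F" by (rule mon_deg_le_total_degree)
  then show "i + j \<le> total_degree F" by (simp add: mon_deg_exp4)
qed

definition eval_nested :: "complex \<Rightarrow> complex \<Rightarrow> complex \<times> complex \<Rightarrow> qpoly \<Rightarrow> complex" where
  "eval_nested x y z = poly_hom (poly_hom (beval z) x) y"

lemma is_ring_hom_eval_nested: "is_ring_hom (eval_nested x y z)"
  unfolding eval_nested_def by (intro is_ring_hom_poly_hom is_ring_hom_beval)

lemma eval_nested_monom:
  "eval_nested x y (s, t) (nested_monom m c) =
    c * s ^ Poly_Mapping.lookup m S * t ^ Poly_Mapping.lookup m T *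
    x ^ Poly_Mapping.lookup m X * y ^ Poly_Mapping.lookup m Y"
proof -
  have r1: "is_ring_hom (\<lambda>c::complex. c)" by (rule is_ring_hom_id)
  have r2: "is_ring_hom (poly_hom (\<lambda>c::complex. c) s)" by (rule is_ring_hom_poly_hom[OF r1])
  have r3: "is_ring_hom (beval (s, t))" by (rule is_ring_hom_beval)
  have r4: "is_ring_hom (poly_hom (beval (s, t)) x)" by (rule is_ring_hom_poly_hom[OF r3])
  have e: "beval (s, t) (monom (monom c i) j) = c * s ^ i * t ^ j" for i j
    unfolding beval_def by (simp add: poly_hom_monom[OF r2] poly_hom_monom[OF r1])
  show ?thesis
    unfolding eval_nested_def nested_monom_def
    by (simp add: poly_hom_monom[OF r4] poly_hom_monom[OF r3] e)
qed

lemma prod_keys_vr: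
  "(\<Prod>v\<in>Poly_Mapping.keys m. (g v :: complex) ^ Poly_Mapping.lookup m v) =
    g X ^ Poly_Mapping.lookup m X * g Y ^ Poly_Mapping.lookup m Y *
    g S ^ Poly_Mapping.lookup m S * g T ^ Poly_Mapping.lookup m T"
proof -
  have "(\<Prod>v\<in>Poly_Mapping.keys m. g v ^ Poly_Mapping.lookup m v) =
      (\<Prod>v\<in>UNIV. g v ^ Poly_Mapping.lookup m v)"
    by (rule prod.mono_neutral_left) (auto simp: in_keys_iff)
  also have "\<dots> = g X ^ Poly_Mapping.lookup m X * g Y ^ Poly_Mapping.lookup m Y *
      g S ^ Poly_Mapping.lookup m S * g T ^ Poly_Mapping.lookup m T"
    by (simp add: UNIV_vr)
  finally show ?thesis .
qed

lemma eval_eq_eval_nested: "eval F (pt x y s t) = eval_nested x y (s, t) (nested F)"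
proof -
  have "eval_nested x y (s, t) (nested F) =
      (\<Sum>m\<in>Poly_Mapping.keys F. eval_nested x y (s, t) (nested_monom m (Poly_Mapping.lookup F m)))"
    unfolding nested_def by (rule ring_hom_sum[OF is_ring_hom_eval_nested])
  also have "\<dots> = eval F (pt x y s t)"
    unfolding eval_def
    by (intro sum.cong refl) (simp add: eval_nested_monom prod_keys_vr pt_def)
  finally show ?thesis by simp
qed

lemma eval_nested_eq_0_iff:
  "(\<forall>x y. eval_nested x y z P = 0) \<longleftrightarrow> (\<forall>a b. beval z (coeff (coeff P b) a) = 0)"
proof -
  have "(\<forall>y. eval_nested x y z P = 0) \<longleftrightarrow> (\<forall>b. poly_hom (beval z) x (coeff P b) = 0)" for x
    unfolding eval_nested_def by (intro poly_hom_eq_0_iff is_ring_hom_poly_hom is_ring_hom_beval)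
  moreover have "(\<forall>x. poly_hom (beval z) x (coeff P b) = 0) \<longleftrightarrow> (\<forall>a. beval z (coeff (coeff P b) a) = 0)" for b
    by (intro poly_hom_eq_0_iff is_ring_hom_beval)
  ultimately show ?thesis by blast
qed

lemma fiber_curve_eq_UNIV_iff:
  "fiber_curve F q = UNIV \<longleftrightarrow> (\<forall>ab. beval q (xy_coeff F ab) = 0)"
proof -
  have "fiber_curve F q = UNIV \<longleftrightarrow> (\<forall>x y. eval F (pt x y (fst q) (snd q)) = 0)"
    unfolding fiber_curve_def by auto
  also have "\<dots> \<longleftrightarrow> (\<forall>x y. eval_nested x y q (nested F) = 0)" by (simp add: eval_eq_eval_nested)
  also have "\<dots> \<longleftrightarrow> (\<forall>a b. beval q (xy_coeff F (a, b)) = 0)"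
    unfolding eval_nested_eq_0_iff xy_coeff_def by simp
  also have "\<dots> \<longleftrightarrow> (\<forall>ab. beval q (xy_coeff F ab) = 0)" by auto
  finally show ?thesis .
qed

definition const4 :: "complex \<Rightarrow> mpoly4" where
  "const4 c = Poly_Mapping.single 0 c"

definition var4 :: "vr \<Rightarrow> mpoly4" where
  "var4 v = Poly_Mapping.single (Poly_Mapping.single v 1) 1"

lemma is_ring_hom_const4: "is_ring_hom const4"
  unfolding is_ring_hom_def const4_def by (simp add: single_add mult_single)

lemma var4_power: "var4 v ^ n = Poly_Mapping.single (Poly_Mapping.single v n) 1"
proof (induction n)
  case 0 then show ?case by simp
next
  case (Suc n)
  have "var4 v ^ Suc n = var4 v * var4 v ^ n" by simp
  also have "\<dots> = var4 v * Poly_Mapping.single (Poly_Mapping.single v n) 1" by (simp only: Suc)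
  also have "\<dots> = Poly_Mapping.single (Poly_Mapping.single v 1 + Poly_Mapping.single v n) 1"
    unfolding var4_def by (simp add: mult_single)
  also have "Poly_Mapping.single v 1 + Poly_Mapping.single v n = Poly_Mapping.single v (Suc n)"
    by (simp add: single_add[symmetric])
  finally show ?case .
qed

definition embed_s :: "complex poly \<Rightarrow> mpoly4" where "embed_s = poly_hom const4 (var4 S)"
definition embed_st :: "bpoly \<Rightarrow> mpoly4" where "embed_st = poly_hom embed_s (var4 T)"
definition embed_stx :: "bpoly poly \<Rightarrow> mpoly4" where "embed_stx = poly_hom embed_st (var4 X)"
definition embed_stxy :: "qpoly \<Rightarrow> mpoly4" where "embed_stxy = poly_hom embed_stx (var4 Y)"

lemma is_ring_hom_embed_s: "is_ring_hom embed_s"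
  unfolding embed_s_def by (intro is_ring_hom_poly_hom is_ring_hom_const4)
lemma is_ring_hom_embed_st: "is_ring_hom embed_st"
  unfolding embed_st_def by (intro is_ring_hom_poly_hom is_ring_hom_embed_s)
lemma is_ring_hom_embed_stx: "is_ring_hom embed_stx"
  unfolding embed_stx_def by (intro is_ring_hom_poly_hom is_ring_hom_embed_st)
lemma is_ring_hom_embed_stxy: "is_ring_hom embed_stxy"
  unfolding embed_stxy_def by (intro is_ring_hom_poly_hom is_ring_hom_embed_stx)

lemma embed_st_monom: "embed_st (monom (monom c i) j) =
  Poly_Mapping.single (Poly_Mapping.single S i + Poly_Mapping.single T j) c"
proof -
  have "embed_st (monom (monom c i) j) = const4 c * var4 S ^ i * var4 T ^ j"
    unfolding embed_st_def embed_s_def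
    by (simp add: poly_hom_monom[OF is_ring_hom_poly_hom[OF is_ring_hom_const4]]
        poly_hom_monom[OF is_ring_hom_const4])
  also have "\<dots> = Poly_Mapping.single (Poly_Mapping.single S i + Poly_Mapping.single T j) c"
    by (simp add: var4_power const4_def mult_single)
  finally show ?thesis .
qed

lemma embed_stxy_nested_monom: "embed_stxy (nested_monom m c) = Poly_Mapping.single m c"
proof -
  have "embed_stxy (nested_monom m c) =
      embed_st (monom (monom c (Poly_Mapping.lookup m S)) (Poly_Mapping.lookup m T)) *
      var4 X ^ Poly_Mapping.lookup m X * var4 Y ^ Poly_Mapping.lookup m Y"
    unfolding embed_stxy_def embed_stx_def nested_monom_def
    by (simp add: poly_hom_monom[OF is_ring_hom_embed_stx[unfolded embed_stx_def]]
        poly_hom_monom[OF is_ring_hom_embed_st])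
  also have "\<dots> = Poly_Mapping.single (exp4 (Poly_Mapping.lookup m S) (Poly_Mapping.lookup m T)
      (Poly_Mapping.lookup m X) (Poly_Mapping.lookup m Y)) c"
    by (simp add: embed_st_monom var4_power mult_single exp4_def)
  also have "\<dots> = Poly_Mapping.single m c" by (simp flip: exp4_lookup)
  finally show ?thesis .
qed

lemma sum_single_lookup:
  fixes F :: "'a \<Rightarrow>\<^sub>0 'b::comm_monoid_add"
  shows "(\<Sum>m\<in>Poly_Mapping.keys F. Poly_Mapping.single m (Poly_Mapping.lookup F m)) = F"
proof (rule poly_mapping_eqI)
  fix k
  have "Poly_Mapping.lookup (\<Sum>m\<in>Poly_Mapping.keys F. Poly_Mapping.single m (Poly_Mapping.lookup F m)) k
      = (\<Sum>m\<in>Poly_Mapping.keys F. if m = k then Poly_Mapping.lookup F m else 0)"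
    by (simp add: lookup_sum lookup_single when_def)
  also have "\<dots> = Poly_Mapping.lookup F k" by (simp add: in_keys_iff)
  finally show "Poly_Mapping.lookup (\<Sum>m\<in>Poly_Mapping.keys F. Poly_Mapping.single m (Poly_Mapping.lookup F m)) k
      = Poly_Mapping.lookup F k" .
qed

lemma embed_stxy_nested: "embed_stxy (nested F) = F"
  unfolding nested_def
  by (simp add: ring_hom_sum[OF is_ring_hom_embed_stxy] embed_stxy_nested_monom sum_single_lookup)

lemma vars_var4: "vars (var4 v) = {v}"
  by (simp add: vars_def var4_def)

lemma cartesian_0: "cartesian 0"
  unfolding cartesian_def
  by (rule exI[of _ "var4 X"], rule exI[of _ "var4 S"], rule exI[of _ 0], rule exI[of _ 0])
    (simp add: vars_var4)

definition exp2 :: "nat \<times> nat \<Rightarrow> vr \<Rightarrow>\<^sub>0 nat" where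
  "exp2 x = Poly_Mapping.single S (fst x) + Poly_Mapping.single T (snd x)"

lemma inj_exp2: "exp2 x = exp2 y \<Longrightarrow> x = y"
proof -
  assume "exp2 x = exp2 y"
  then have "Poly_Mapping.lookup (exp2 x) S = Poly_Mapping.lookup (exp2 y) S"
        "Poly_Mapping.lookup (exp2 x) T = Poly_Mapping.lookup (exp2 y) T" by simp_all
  then show "x = y" by (simp add: exp2_def lookup_add lookup_single prod_eq_iff)
qed

lemma embed_st_expansion:
  "embed_st p = (\<Sum>x\<in>exps_le (bdegree p). Poly_Mapping.single (exp2 x) (coeff (coeff p (snd x)) (fst x)))"
proof -
  have "p \<in> deg_le (bdegree p)" by (simp add: deg_le_def)
  then have "embed_st p =
      embed_st (\<Sum>x\<in>exps_le (bdegree p). bsmult (coeff (coeff p (snd x)) (fst x)) (bmonom x))"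
    by (subst bmonom_expansion) simp_all
  also have "\<dots> =
      (\<Sum>x\<in>exps_le (bdegree p). Poly_Mapping.single (exp2 x) (coeff (coeff p (snd x)) (fst x)))"
    by (simp add: ring_hom_sum[OF is_ring_hom_embed_st] bsmult_bmonom embed_st_monom exp2_def)
  finally show ?thesis .
qed

lemma keys_exp2: "Poly_Mapping.keys (exp2 x) \<subseteq> {S, T}"
proof -
  have "Poly_Mapping.keys (exp2 x) \<subseteq>
      Poly_Mapping.keys (Poly_Mapping.single S (fst x)) \<union> Poly_Mapping.keys (Poly_Mapping.single T (snd x))"
    unfolding exp2_def by (rule keys_add)
  also have "\<dots> \<subseteq> {S, T}" by auto
  finally show ?thesis .
qed

lemma vars_embed_st_subset: "vars (embed_st p) \<subseteq> {S, T}"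
proof
  fix v assume "v \<in> vars (embed_st p)"
  then obtain m where m: "m \<in> Poly_Mapping.keys (embed_st p)" "v \<in> Poly_Mapping.keys m"
    by (auto simp: vars_def)
  have "m \<in> (\<Union>x\<in>exps_le (bdegree p).
      Poly_Mapping.keys (Poly_Mapping.single (exp2 x) (coeff (coeff p (snd x)) (fst x))))"
    using keys_sum m(1)[unfolded embed_st_expansion[of p]] by (rule subsetD)
  then obtain x where "m = exp2 x" by (auto split: if_splits)
  then have "Poly_Mapping.keys m \<subseteq> {S, T}" using keys_exp2 by simp
  then show "v \<in> {S, T}" using m(2) by (rule subsetD)
qed

lemma lookup_embed_st: "Poly_Mapping.lookup (embed_st p) (exp2 y) = coeff (coeff p (snd y)) (fst y)"
proof -
  have "Poly_Mapping.lookup (embed_st p) (exp2 y) =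
        (\<Sum>x\<in>exps_le (bdegree p). if x = y then coeff (coeff p (snd x)) (fst x) else 0)"
    unfolding embed_st_expansion[of p] lookup_sum
    by (intro sum.cong refl) (auto simp: lookup_single when_def dest: inj_exp2)
  also have "\<dots> = (if y \<in> exps_le (bdegree p) then coeff (coeff p (snd y)) (fst y) else 0)"
    by simp
  also have "\<dots> = coeff (coeff p (snd y)) (fst y)"
    using le_bdegree[of p "snd y" "fst y"] by (auto simp: exps_le_def)
  finally show ?thesis .
qed

lemma prime_has_nonconstant_term:
  assumes "prime (p :: bpoly)"
  shows "\<exists>i j. (i, j) \<noteq> (0, 0) \<and> coeff (coeff p j) i \<noteq> 0"
proof (rule ccontr)
  assume "\<not> ?thesis"
  then have h: "\<And>i j. (i, j) \<noteq> (0, 0) \<Longrightarrow> coeff (coeff p j) i = 0" by blast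
  define c where "c = coeff (coeff p 0) 0"
  have "p = [:[:c:]:]"
  proof (rule poly_eqI, rule poly_eqI)
    fix j i
    show "coeff (coeff p j) i = coeff (coeff [:[:c:]:] j) i"
      using h[of i j] by (cases i; cases j) (auto simp: c_def)
  qed
  moreover have "p \<noteq> 0" using assms by auto
  ultimately have "c \<noteq> 0" by auto
  then have "1 = c * inverse c" by simp
  then have "c dvd 1" by (rule dvdI)
  then have "is_unit [:[:c:]:]" by (simp add: is_unit_const_poly_iff)
  with \<open>p = [:[:c:]:]\<close> assms show False by (simp add: not_prime_unit)
qed

lemma vars_embed_st_nonempty: "prime p \<Longrightarrow> vars (embed_st p) \<noteq> {}"
proof -
  assume "prime p"
  then obtain i j where ij: "(i, j) \<noteq> (0, 0)" "coeff (coeff p j) i \<noteq> 0"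
    using prime_has_nonconstant_term by blast
  have "Poly_Mapping.lookup (embed_st p) (exp2 (i, j)) \<noteq> 0" using ij by (simp add: lookup_embed_st)
  then have k: "exp2 (i, j) \<in> Poly_Mapping.keys (embed_st p)" by (simp add: in_keys_iff)
  have "S \<in> Poly_Mapping.keys (exp2 (i, j)) \<or> T \<in> Poly_Mapping.keys (exp2 (i, j))"
    using ij(1) by (auto simp: in_keys_iff exp2_def lookup_add lookup_single)
  then show ?thesis using k by (auto simp: vars_def)
qed

lemma cartesian_if_common_prime_divisor:
  assumes p: "prime p" and dv: "\<And>ab. p dvd xy_coeff F ab"
  shows "cartesian F"
proof -
  define L where "L = map_poly (map_poly (\<lambda>r. r div p)) (nested F)"
  have eq: "nested F = [:[:p:]:] * L"
  proof (rule poly_eqI, rule poly_eqI)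
    fix b a
    have d: "p dvd coeff (coeff (nested F) b) a" using dv[of "(a, b)"] by (simp add: xy_coeff_def)
    have "coeff (coeff ([:[:p:]:] * L) b) a = p * (coeff (coeff (nested F) b) a div p)"
      by (simp add: L_def coeff_map_poly)
    also have "\<dots> = coeff (coeff (nested F) b) a" using d by simp
    finally show "coeff (coeff (nested F) b) a = coeff (coeff ([:[:p:]:] * L) b) a" by simp
  qed
  have "F = embed_stxy ([:[:p:]:] * L)" using embed_stxy_nested[of F, unfolded eq, symmetric] .
  also have "\<dots> = embed_stxy [:[:p:]:] * embed_stxy L" by (rule ring_hom_mult[OF is_ring_hom_embed_stxy])
  also have "embed_stxy [:[:p:]:] = embed_st p"
  proof -
    have "embed_stxy [:[:p:]:] = embed_stx [:p:]"
      unfolding embed_stxy_def by (rule poly_hom_const[OF is_ring_hom_embed_stx])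
    also have "embed_stx [:p:] = embed_st p"
      unfolding embed_stx_def by (rule poly_hom_const[OF is_ring_hom_embed_st])
    finally show ?thesis .
  qed
  finally have F: "F = var4 X * 0 + embed_st p * embed_stxy L" by simp
  show ?thesis unfolding cartesian_def
    by (rule exI[of _ "var4 X"], rule exI[of _ "embed_st p"], rule exI[of _ 0], rule exI[of _ "embed_stxy L"])
      (use F vars_embed_st_subset vars_embed_st_nonempty[OF p] in \<open>simp add: vars_var4\<close>)
qed

lemma exists_xy_coeff_nonzero:
  assumes "F \<noteq> 0"
  obtains ab where "xy_coeff F ab \<noteq> 0"
proof -
  have "nested F \<noteq> 0"
    using assms embed_stxy_nested[of F] is_ring_hom_embed_stxy by (auto simp: is_ring_hom_def)
  then obtain b a where "coeff (coeff (nested F) b) a \<noteq> 0" by (auto simp: poly_eq_iff)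
  then show ?thesis using that[of "(a, b)"] by (simp add: xy_coeff_def)
qed

theorem lemma2p4:
  fixes F :: mpoly4 and d :: nat
  assumes "total_degree F = d"
    and "\<not> cartesian F"
  shows "finite {q. fiber_curve F q = UNIV} \<and> card {q. fiber_curve F q = UNIV} \<le> d ^ 2"
proof (rule finite_if_finite_subsets_card_bdd)
  fix Z assume Z: "Z \<subseteq> {q. fiber_curve F q = UNIV}" "finite Z"
  show "card Z \<le> d ^ 2"
  proof (cases "Z = {}")
    case False
    have "F \<noteq> 0" using assms(2) cartesian_0 by auto
    then obtain ab where "xy_coeff F ab \<noteq> 0" by (rule exists_xy_coeff_nonzero)
    moreover have "\<exists>ab. \<not> p dvd xy_coeff F ab" if "prime p" for p
      using cartesian_if_common_prime_divisor[OF that] assms(2) by blast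
    moreover have "\<And>ab. bdegree (xy_coeff F ab) \<le> d"
      using bdegree_xy_coeff assms(1) by blast
    moreover have "\<And>ab z. z \<in> Z \<Longrightarrow> beval z (xy_coeff F ab) = 0"
      using Z(1) by (auto simp: fiber_curve_eq_UNIV_iff)
    ultimately obtain f g where fg: "f \<noteq> 0" "g \<noteq> 0" "coprime f g" "bdegree f \<le> d" "bdegree g \<le> d"
      "\<And>z. z \<in> Z \<Longrightarrow> beval z f = 0" "\<And>z. z \<in> Z \<Longrightarrow> beval z g = 0"
      by (rule exists_coprime_vanishing_pair) (use False in auto)
    have "card Z \<le> bdegree f * bdegree g" by (rule bezout_card_common_zeros[OF fg(1-3) Z(2) fg(6-7)])
    also have "\<dots> \<le> d ^ 2" using fg(4-5) by (simp add: power2_eq_square mult_le_mono)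
    finally show ?thesis .
  qed simp
qed

end
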